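(* For every integer $n\ge1$, \[ \sum_{k=1}^{n}k\,\omega(n-k)=\sum_{\substack{m+k=n\\ m\ge1,\ k\ge0}}\phi(m)\,\Omega_m(k), \] where $\phi$ is Euler's totient function.
   Context: $\omega:\mathbb{Z}\to\mathbb{Z}$ is defined by $\omega(0)=1$; $\omega(m)=(-1)^j$ if $m=\frac{3j^2\pm j}{2}$ for some integer $j\ge1$; $\omega(m)=0$ otherwise (in particular for $m<0$). For $m\ge1$ and integer $k$, $\Omega_m(k)=\sum_{j\ge0}\omega(k-jm)=\omega(k)+\omega(k-m)+\omega(k-2m)+\cdots$. *)

theory Defs
  imports "HOL-Number_Theory.Number_Theory"
begin

definition pent_omega :: "int \<Rightarrow> int" where
  "pent_omega m =
     (if m = 0 then 1
      else if (\<exists>j::int. j \<ge> 1 \<and> (2 * m = 3 * j^2 + j \<or> 2 * m = 3 * j^2 - j))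
      then (-1) ^ nat (THE j::int. j \<ge> 1 \<and> (2 * m = 3 * j^2 + j \<or> 2 * m = 3 * j^2 - j))
      else 0)"

text \<open>Omega_m(k) = sum over j >= 0 of omega(k - j m); only the finitely many j with
  k - j m >= 0 contribute, since omega vanishes on negative integers.\<close>
definition Omega_sum :: "nat \<Rightarrow> int \<Rightarrow> int" where
  "Omega_sum m k = (\<Sum>j\<in>{j::nat. int j * int m \<le> k}. pent_omega (k - int j * int m))"

end

theory Submission
  imports Defs
begin

text \<open>The identity holds for every arithmetic function in place of \<open>\<omega>\<close>. Write \<open>k\<close>
  as the sum of \<open>\<phi>(d)\<close> over the divisors \<open>d\<close> of \<open>k\<close> (Gauss) and interchange the two
  summations: the coefficient of \<open>\<phi>(m)\<close> becomes the sum of \<open>\<omega>(n - t)\<close> over the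
  multiples \<open>t = (j + 1) m \<le> n\<close>, which is \<open>\<Omega>\<^sub>m(n - m)\<close>.\<close>

lemma totient_sum_divisors_bounded:
  assumes "0 < t" "t \<le> (n::nat)"
  shows "(\<Sum>m | m \<in> {1..n} \<and> m dvd t. totient m) = t"
proof -
  have "{m. m \<in> {1..n} \<and> m dvd t} = {d. d dvd t}"
    using assms by (auto dest: dvd_imp_le)
  then show ?thesis
    by (simp add: totient_divisor_sum)
qed

lemma sum_over_multiples_eq_progression_sum:
  fixes f :: "int \<Rightarrow> 'a::comm_monoid_add"
  assumes "0 < m"
  shows "(\<Sum>t | t \<in> {1..n} \<and> m dvd t. f (int n - int t))
       = (\<Sum>j | int j * int m \<le> int n - int m. f (int n - int m - int j * int m))"
proof (rule sum.reindex_bij_witness[where i = "\<lambda>j. (j + 1) * m" and j = "\<lambda>t. t div m - 1"])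
  fix j :: nat
  assume "j \<in> {j. int j * int m \<le> int n - int m}"
  then have "(j + 1) * m \<le> n"
    by (simp add: algebra_simps flip: of_nat_mult of_nat_add)
  then show "(j + 1) * m \<in> {t. t \<in> {1..n} \<and> m dvd t}"
    using assms by auto
  show "(j + 1) * m div m - 1 = j"
    using assms by simp
next
  fix t
  assume "t \<in> {t. t \<in> {1..n} \<and> m dvd t}"
  then obtain q where t: "t = q * m" "1 \<le> t" "t \<le> n"
    by (auto elim: dvdE simp: mult.commute)
  then have "0 < q"
    by (cases q) auto
  then have "t div m - 1 + 1 = q"
    using t assms by simp
  then show "(t div m - 1 + 1) * m = t"
    using t by simp
  from \<open>t div m - 1 + 1 = q\<close> have "int (t div m - 1) = int q - 1"
    by linarith
  with t show "t div m - 1 \<in> {j. int j * int m \<le> int n - int m}"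
    "f (int n - int m - int (t div m - 1) * int m) = f (int n - int t)"
    by (simp_all add: algebra_simps flip: of_nat_mult)
qed

lemma sum_weighted_eq_totient_progression_sums:
  fixes f :: "int \<Rightarrow> 'a::comm_ring_1"
  shows "(\<Sum>k=1..n. of_nat k * f (int n - int k))
       = (\<Sum>m=1..n. of_nat (totient m)
            * (\<Sum>j | int j * int m \<le> int n - int m. f (int n - int m - int j * int m)))"
proof -
  have "(\<Sum>k=1..n. of_nat k * f (int n - int k))
      = (\<Sum>k\<in>{1..n}. \<Sum>m | m \<in> {1..n} \<and> m dvd k. of_nat (totient m) * f (int n - int k))"
  proof (intro sum.cong refl)
    fix k
    assume "k \<in> {1..n}"
    then have "of_nat k = (of_nat (\<Sum>m | m \<in> {1..n} \<and> m dvd k. totient m) :: 'a)"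
      by (subst totient_sum_divisors_bounded) auto
    then show "of_nat k * f (int n - int k)
             = (\<Sum>m | m \<in> {1..n} \<and> m dvd k. of_nat (totient m) * f (int n - int k))"
      by (simp add: sum_distrib_right)
  qed
  also have "\<dots> = (\<Sum>m\<in>{1..n}. \<Sum>k | k \<in> {1..n} \<and> m dvd k. of_nat (totient m) * f (int n - int k))"
    by (rule sum.swap_restrict) auto
  also have "\<dots> = (\<Sum>m=1..n. of_nat (totient m)
                  * (\<Sum>j | int j * int m \<le> int n - int m. f (int n - int m - int j * int m)))"
  proof (intro sum.cong refl)
    fix m
    assume "m \<in> {1..n}"
    then have "0 < m"
      by simp
    then show "(\<Sum>k | k \<in> {1..n} \<and> m dvd k. of_nat (totient m) * f (int n - int k))
             = of_nat (totient m)
               * (\<Sum>j | int j * int m \<le> int n - int m. f (int n - int m - int j * int m))"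
      by (simp only: sum_over_multiples_eq_progression_sum flip: sum_distrib_left)
  qed
  finally show ?thesis .
qed

theorem mainTheorem6:
  fixes n :: nat
  assumes "n \<ge> 1"
  shows "(\<Sum>k=1..n. int k * pent_omega (int n - int k)) =
         (\<Sum>m=1..n. int (totient m) * Omega_sum m (int n - int m))"
  unfolding Omega_sum_def
  by (rule sum_weighted_eq_totient_progression_sums)

end
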